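(* Let $G$ be a simple graph on $n$ vertices and let $f$ be its associated quadratic Boolean function. Then for every graph $H$ in the LC orbit $[G]$, the Boolean function associated with $H$ has $\mathrm{PAR}_{IHN}=2^{\lambda(G)}$. In particular $\mathrm{PAR}_{IHN}(f)=2^{\lambda(G)}$.
   Context: All graphs are finite, simple and undirected, with vertex set $\{0,\dots,n-1\}$. The Boolean function associated with $G$ is $f(\boldsymbol{x})=\sum_{\{i,j\}\in E(G)} x_ix_j \pmod 2$, $\boldsymbol{x}\in\mathbb{Z}_2^n$. For $v\in V$ with neighbourhood $N_v$, the local complementation $G^v$ complements the subgraph induced on $N_v$; the LC orbit $[G]$ is the set of graphs obtainable from $G$ by finite sequences of local complementations. $\alpha(G)$ is the independence number and $\lambda(G)=\max_{H\in[G]}\alpha(H)$. Let $I=\begin{pmatrix}1&0\\0&1\end{pmatrix}$, $H=\frac1{\sqrt2}\begin{pmatrix}1&1\\1&-1\end{pmatrix}$, $N=\frac1{\sqrt2}\begin{pmatrix}1&i\\1&-i\end{pmatrix}$ with $i^2=-1$. For a Boolean function $f$ on $n$ variables, let $\boldsymbol{s}\in\mathbb{C}^{2^n}$ be the vector with entries $s_{\boldsymbol{x}}=2^{-n/2}(-1)^{f(\boldsymbol{x})}$ (indexed by $\boldsymbol{x}\in\mathbb{Z}_2^n$ in the standard order consistent with the Kronecker product). Then $\mathrm{PAR}_{IHN}(f)=2^n\max_{U}\max_{k}|(U\boldsymbol{s})_k|^2$, the maximum over all $3^n$ transforms $U=U_0\otimes\cdots\otimes U_{n-1}$ with each $U_j\in\{I,H,N\}$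 and over all coordinates $k\in\mathbb{Z}_{2^n}$. *)

theory Defs
  imports Complex_Main "HOL-Library.FuncSet"
begin

definition simple_graph :: "nat \<Rightarrow> nat set set \<Rightarrow> bool" where
  "simple_graph n E \<longleftrightarrow> (\<forall>e\<in>E. \<exists>i j. i < n \<and> j < n \<and> i \<noteq> j \<and> e = {i, j})"

definition nbhd :: "nat set set \<Rightarrow> nat \<Rightarrow> nat set" where
  "nbhd E v = {u. {u, v} \<in> E}"

definition local_compl :: "nat set set \<Rightarrow> nat \<Rightarrow> nat set set" where
  "local_compl E v =
     (let T = {{u, w} | u w. u \<in> nbhd E v \<and> w \<in> nbhd E v \<and> u \<noteq> w}
      in (E - T) \<union> (T - E))"

inductive_set lc_orbit :: "nat \<Rightarrow> nat set set \<Rightarrow> nat set set set"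
  for n :: nat and E :: "nat set set" where
  refl: "E \<in> lc_orbit n E"
| step: "H \<in> lc_orbit n E \<Longrightarrow> v < n \<Longrightarrow> local_compl H v \<in> lc_orbit n E"

definition independent_set :: "nat \<Rightarrow> nat set set \<Rightarrow> nat set \<Rightarrow> bool" where
  "independent_set n E S \<longleftrightarrow> S \<subseteq> {0..<n} \<and> (\<forall>u\<in>S. \<forall>w\<in>S. {u, w} \<notin> E)"

definition independence_number :: "nat \<Rightarrow> nat set set \<Rightarrow> nat" where
  "independence_number n E = Max {card S | S. independent_set n E S}"

definition lc_lambda :: "nat \<Rightarrow> nat set set \<Rightarrow> nat" where
  "lc_lambda n E = Max (independence_number n ` lc_orbit n E)"

definition cube :: "nat \<Rightarrow> (nat \<Rightarrow> nat) set" where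
  "cube n = Pi\<^sub>E {0..<n} (\<lambda>_. {0, 1})"

definition graph_bf :: "nat \<Rightarrow> nat set set \<Rightarrow> (nat \<Rightarrow> nat) \<Rightarrow> nat" where
  "graph_bf n E x = (\<Sum>(i, j) \<in> {(i, j). i < j \<and> j < n \<and> {i, j} \<in> E}. x i * x j) mod 2"

text \<open>The 2x2 matrices I (code 0), H (code 1), N (code 2), indexed by {0,1}.\<close>
definition mat_IHN :: "nat \<Rightarrow> nat \<Rightarrow> nat \<Rightarrow> complex" where
  "mat_IHN c a b =
     (if c = 0 then (if a = b then 1 else 0)
      else if c = 1 then (if a = 1 \<and> b = 1 then -1 else 1) / complex_of_real (sqrt 2)
      else (if b = 0 then 1 else if a = 0 then \<i> else - \<i>) / complex_of_real (sqrt 2))"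

text \<open>Entry k of (U_0 \<otimes> ... \<otimes> U_{n-1}) s, where U_j = mat_IHN (c j), with
  s_x = 2^(-n/2) (-1)^(f x).\<close>
definition transform_entry ::
  "nat \<Rightarrow> ((nat \<Rightarrow> nat) \<Rightarrow> nat) \<Rightarrow> (nat \<Rightarrow> nat) \<Rightarrow> (nat \<Rightarrow> nat) \<Rightarrow> complex" where
  "transform_entry n f c k =
     (\<Sum>x\<in>cube n. (\<Prod>j<n. mat_IHN (c j) (k j) (x j))
        * complex_of_real (2 powr (- real n / 2)) * (-1) ^ f x)"

definition PAR_IHN :: "nat \<Rightarrow> ((nat \<Rightarrow> nat) \<Rightarrow> nat) \<Rightarrow> real" where
  "PAR_IHN n f = 2 ^ n *
     Max {(cmod (transform_entry n f c k))\<^sup>2 | c k.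
            c \<in> Pi\<^sub>E {0..<n} (\<lambda>_. {0, 1, 2}) \<and> k \<in> cube n}"

end

theory Submission
  imports Defs
begin

text \<open>
  Local complementation at \<open>v\<close> multiplies \<open>(-1)^f(x)\<close> by \<open>(-1)^(w choose 2)\<close>, where \<open>w\<close>
  is the number of ones of \<open>x\<close> on the neighbourhood of \<open>v\<close>. This phase is absorbed by the
  single-qubit factors at \<open>v\<close> and at its neighbours: up to unimodular phases and a
  permutation of the output index, it permutes \<open>{I, H, N}\<close>. So every entry of the
  transform of \<open>G\<^sup>v\<close> has the modulus of some entry of the transform of \<open>G\<close>, and the
  spectrum of moduli is an invariant of the orbit.

  Upper bound: if \<open>W\<close> is the set of positions carrying \<open>H\<close> or \<open>N\<close>, every entry of the
  unnormalised transform has squared modulus at most \<open>2^|W|\<close>. If \<open>W\<close> is not independent, local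
  complementation at an \<open>N\<close>-position of \<open>W\<close> turns it into \<open>I\<close>; if \<open>W\<close> carries only \<open>H\<close>,
  local complementation at one end of an edge inside \<open>W\<close> first turns the other end into
  \<open>N\<close>. Either way \<open>W\<close> shrinks, so one ends in a graph of the orbit in which \<open>W\<close> is
  independent, whence \<open>|W| \<le> \<lambda>(G)\<close>. Lower bound: for an independent set \<open>S\<close> of a graph in
  the orbit, \<open>H\<close> on \<open>S\<close> and \<open>I\<close> elsewhere give the entry \<open>2^(|S|/2)\<close> at \<open>k = 0\<close>.
\<close>

section \<open>Local complementation and the LC orbit\<close>

lemma simple_graph_subset_Pow: "simple_graph n E \<Longrightarrow> E \<subseteq> Pow {0..<n}"
  unfolding simple_graph_def by auto

lemma simple_graph_edgeD:
  assumes "simple_graph n E" "{u, w} \<in> E" shows "u < n" "w < n" "u \<noteq> w"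
proof -
  obtain i j where "i < n" "j < n" "i \<noteq> j" "{u, w} = {i, j}"
    using assms unfolding simple_graph_def by meson
  then show "u < n" "w < n" "u \<noteq> w" by (auto simp: doubleton_eq_iff)
qed

lemma simple_graph_finite: "simple_graph n E \<Longrightarrow> finite E"
  using simple_graph_subset_Pow by (meson finite_Pow_iff finite_atLeastLessThan finite_subset)

lemma not_in_nbhd_self: "simple_graph n E \<Longrightarrow> v \<notin> nbhd E v"
  unfolding simple_graph_def nbhd_def by fastforce

lemma nbhd_subset: "simple_graph n E \<Longrightarrow> nbhd E v \<subseteq> {0..<n}"
  unfolding simple_graph_def nbhd_def by (auto simp: doubleton_eq_iff)

lemma finite_nbhd: "simple_graph n E \<Longrightarrow> finite (nbhd E v)"
  using nbhd_subset by (meson finite_atLeastLessThan finite_subset)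

definition nbhd_pairs :: "nat set set \<Rightarrow> nat \<Rightarrow> nat set set" where
  "nbhd_pairs E v = {e. e \<subseteq> nbhd E v \<and> card e = 2}"

lemma finite_nbhd_pairs: "simple_graph n E \<Longrightarrow> finite (nbhd_pairs E v)"
  using finite_nbhd[THEN finite_Pow_iff[THEN iffD2]] unfolding nbhd_pairs_def
  by (rule rev_finite_subset) auto

lemma local_compl_symdiff:
  "local_compl E v = (E - nbhd_pairs E v) \<union> (nbhd_pairs E v - E)"
proof -
  have "{{u, w} | u w. u \<in> nbhd E v \<and> w \<in> nbhd E v \<and> u \<noteq> w} = nbhd_pairs E v"
    unfolding nbhd_pairs_def by (auto simp: card_2_iff)
  then show ?thesis unfolding local_compl_def Let_def by simp
qed

lemma simple_graph_local_compl:
  assumes "simple_graph n E" shows "simple_graph n (local_compl E v)"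
  unfolding simple_graph_def
proof
  fix e assume "e \<in> local_compl E v"
  then consider "e \<in> E" | "e \<subseteq> nbhd E v" "card e = 2"
    unfolding local_compl_symdiff nbhd_pairs_def by blast
  then show "\<exists>i j. i < n \<and> j < n \<and> i \<noteq> j \<and> e = {i, j}"
  proof cases
    case 1 then show ?thesis using assms unfolding simple_graph_def by blast
  next
    case 2 then show ?thesis using nbhd_subset[OF assms, of v] by (fastforce simp: card_2_iff)
  qed
qed

lemma nbhd_local_compl_self:
  assumes "simple_graph n E" shows "nbhd (local_compl E v) v = nbhd E v"
  using not_in_nbhd_self[OF assms, of v]
  unfolding local_compl_symdiff nbhd_pairs_def nbhd_def by auto

lemma local_compl_local_compl:
  assumes "simple_graph n E" shows "local_compl (local_compl E v) v = E"
proof -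
  have "nbhd_pairs (local_compl E v) v = nbhd_pairs E v"
    unfolding nbhd_pairs_def nbhd_local_compl_self[OF assms] ..
  then show ?thesis unfolding local_compl_symdiff by blast
qed

lemma lc_orbit_simple_graph: "H \<in> lc_orbit n E \<Longrightarrow> simple_graph n E \<Longrightarrow> simple_graph n H"
  by (induction rule: lc_orbit.induct) (auto intro: simple_graph_local_compl)

lemma local_compl_in_lc_orbit: "v < n \<Longrightarrow> local_compl E v \<in> lc_orbit n E"
  by (rule lc_orbit.step[OF lc_orbit.refl])

lemma lc_orbit_trans: "K \<in> lc_orbit n H \<Longrightarrow> H \<in> lc_orbit n E \<Longrightarrow> K \<in> lc_orbit n E"
  by (induction rule: lc_orbit.induct) (auto intro: lc_orbit.step)

lemma lc_orbit_sym: "H \<in> lc_orbit n E \<Longrightarrow> simple_graph n E \<Longrightarrow> E \<in> lc_orbit n H"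
proof (induction rule: lc_orbit.induct)
  case refl show ?case by (rule lc_orbit.refl)
next
  case (step H v)
  have "simple_graph n H" using lc_orbit_simple_graph step by blast
  then have "H \<in> lc_orbit n (local_compl H v)"
    using local_compl_in_lc_orbit[OF step(2), of "local_compl H v"] by (simp add: local_compl_local_compl)
  then show ?case using step lc_orbit_trans by blast
qed

lemma lc_orbit_eq:
  assumes "H \<in> lc_orbit n G" "simple_graph n G" shows "lc_orbit n H = lc_orbit n G"
  using lc_orbit_trans lc_orbit_sym[OF assms] assms(1) by blast

lemma finite_lc_orbit:
  assumes "simple_graph n E" shows "finite (lc_orbit n E)"
proof (rule finite_subset)
  show "lc_orbit n E \<subseteq> Pow (Pow {0..<n})"
    using lc_orbit_simple_graph[OF _ assms] simple_graph_subset_Pow by blast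
qed simp

lemma independence_number_attained: "\<exists>S. independent_set n K S \<and> card S = independence_number n K"
  and card_le_independence_number: "independent_set n K S \<Longrightarrow> card S \<le> independence_number n K"
proof -
  define A where "A = {card S | S. independent_set n K S}"
  have "A \<subseteq> {0..n}"
    unfolding A_def independent_set_def using card_mono[of "{0..<n}"] by fastforce
  then have fin: "finite A" by (rule finite_subset) simp
  have "independent_set n K {}" unfolding independent_set_def by simp
  then have ne: "A \<noteq> {}" unfolding A_def by blast
  show "\<exists>S. independent_set n K S \<and> card S = independence_number n K"
    using Max_in[OF fin ne] unfolding independence_number_def A_def[symmetric] by (auto simp: A_def)
  show "independent_set n K S \<Longrightarrow> card S \<le> independence_number n K"
    using Max_ge[OF fin] unfolding independence_number_def A_def[symmetric] by (auto simp: A_def)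
qed

lemma lc_lambda_attained:
  assumes "simple_graph n E" shows "\<exists>K\<in>lc_orbit n E. independence_number n K = lc_lambda n E"
proof -
  have "lc_lambda n E \<in> independence_number n ` lc_orbit n E"
    unfolding lc_lambda_def using finite_lc_orbit[OF assms] lc_orbit.refl by (intro Max_in) auto
  then show ?thesis by auto
qed

lemma independence_number_le_lc_lambda:
  assumes "simple_graph n E" "K \<in> lc_orbit n E" shows "independence_number n K \<le> lc_lambda n E"
  unfolding lc_lambda_def using finite_lc_orbit[OF assms(1)] assms(2) by (intro Max_ge) auto

section \<open>The sign vector of a graph\<close>

definition graph_sign :: "nat set set \<Rightarrow> (nat \<Rightarrow> nat) \<Rightarrow> complex" where
  "graph_sign E x = (\<Prod>e\<in>E. (-1) ^ (\<Prod>i\<in>e. x i))"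

lemma norm_graph_sign: "cmod (graph_sign E x) = 1"
  unfolding graph_sign_def prod_norm[symmetric] by (simp add: norm_power)

lemma minus_one_power_graph_bf:
  assumes "simple_graph n E"
  shows "(-1::complex) ^ graph_bf n E x = graph_sign E x"
proof -
  define P where "P = {(i, j). i < j \<and> j < n \<and> {i, j} \<in> E}"
  have "bij_betw (\<lambda>p. {fst p, snd p}) P E"
  proof (rule bij_betwI')
    fix e assume "e \<in> E"
    then obtain i j where "i < n" "j < n" "i \<noteq> j" "e = {i, j}"
      using assms unfolding simple_graph_def by blast
    then have "(min i j, max i j) \<in> P" "e = {min i j, max i j}"
      using \<open>e \<in> E\<close> by (auto simp: P_def min_def max_def insert_commute)
    then show "\<exists>p\<in>P. e = {fst p, snd p}" by (intro bexI[of _ "(min i j, max i j)"]) auto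
  qed (auto simp: P_def doubleton_eq_iff prod_eq_iff)
  then have "(\<Prod>p\<in>P. (-1::complex) ^ (\<Prod>l\<in>{fst p, snd p}. x l)) = graph_sign E x"
    unfolding graph_sign_def by (rule prod.reindex_bij_betw)
  moreover have "(\<Prod>p\<in>P. (-1::complex) ^ (\<Prod>l\<in>{fst p, snd p}. x l)) = (-1) ^ (\<Sum>(i, j)\<in>P. x i * x j)"
    by (auto simp: power_sum P_def case_prod_beta intro!: prod.cong)
  ultimately show ?thesis
    unfolding graph_bf_def P_def[symmetric] by (simp add: minus_one_power_iff)
qed

lemma prod_sym_diff:
  fixes g :: "'a \<Rightarrow> 'b::comm_monoid_mult"
  assumes "finite A" "finite B" "\<And>e. g e * g e = 1"
  shows "prod g ((A - B) \<union> (B - A)) = prod g A * prod g B"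
proof -
  have "prod g A * prod g B = (prod g (A \<inter> B) * prod g (A \<inter> B)) * (prod g (A - B) * prod g (B - A))"
    using prod.Int_Diff[OF assms(1), of g B] prod.Int_Diff[OF assms(2), of g A]
    by (simp add: Int_commute algebra_simps)
  also have "prod g (A \<inter> B) * prod g (A \<inter> B) = 1"
    by (simp add: prod.distrib[symmetric] assms(3))
  finally show ?thesis
    using assms by (simp add: prod.union_disjoint Diff_Int_distrib2)
qed

lemma prod_minus_one_card_2_subsets:
  assumes "finite N" "\<forall>u\<in>N. y u \<in> {0, 1}"
  shows "(\<Prod>e | e \<subseteq> N \<and> card e = 2. (-1::'a::comm_ring_1) ^ (\<Prod>i\<in>e. y i))
           = (-1) ^ ((\<Sum>u\<in>N. y u) choose 2)"
proof -
  define W where "W = {u\<in>N. y u = 1}"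
  have "(\<Sum>u\<in>N. y u) = (\<Sum>u\<in>N. if y u = 1 then 1 else 0)"
    using assms(2) by (intro sum.cong) auto
  then have card_W: "card W = (\<Sum>u\<in>N. y u)"
    using assms(1) by (simp add: sum.If_cases W_def Int_def)
  have "finite {e. e \<subseteq> N \<and> card e = 2}"
    using assms(1)[THEN finite_Pow_iff[THEN iffD2]] by (rule rev_finite_subset) auto
  have "(\<Prod>i\<in>e. y i) = (if e \<subseteq> W then 1 else 0)" if "e \<subseteq> N" "card e = 2" for e
    using assms(2) that by (auto simp: W_def subset_iff card_ge_0_finite intro!: prod.neutral)
  then have "(\<Prod>e | e \<subseteq> N \<and> card e = 2. (-1::'a) ^ (\<Prod>i\<in>e. y i))
      = (\<Prod>e | e \<subseteq> N \<and> card e = 2. if e \<subseteq> W then -1 else 1)"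
    by (intro prod.cong) auto
  also have "\<dots> = (\<Prod>e\<in>{e. e \<subseteq> N \<and> card e = 2} \<inter> {e. e \<subseteq> W}. -1)"
    by (simp add: prod.If_cases \<open>finite {e. e \<subseteq> N \<and> card e = 2}\<close>)
  also have "{e. e \<subseteq> N \<and> card e = 2} \<inter> {e. e \<subseteq> W} = {e. e \<subseteq> W \<and> card e = 2}"
    by (auto simp: W_def)
  also have "(\<Prod>e\<in>{e. e \<subseteq> W \<and> card e = 2}. (-1::'a)) = (-1) ^ (card W choose 2)"
    using n_subsets[of W 2] assms(1) by (simp add: W_def)
  finally show ?thesis unfolding card_W .
qed

lemma graph_sign_local_compl:
  assumes "simple_graph n E" "\<forall>u\<in>nbhd E v. x u \<in> {0, 1}"
  shows "graph_sign (local_compl E v) x = graph_sign E x * (-1) ^ ((\<Sum>u\<in>nbhd E v. x u) choose 2)"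
proof -
  have "graph_sign (local_compl E v) x = graph_sign E x * (\<Prod>e\<in>nbhd_pairs E v. (-1) ^ (\<Prod>i\<in>e. x i))"
    unfolding graph_sign_def local_compl_symdiff
  proof (rule prod_sym_diff)
    show "finite E" "finite (nbhd_pairs E v)"
      using simple_graph_finite[OF assms(1)] finite_nbhd_pairs[OF assms(1)] .
    show "(-1::complex) ^ (\<Prod>i\<in>e. x i) * (-1) ^ (\<Prod>i\<in>e. x i) = 1" for e
      by (simp flip: power_mult_distrib)
  qed
  also have "(\<Prod>e\<in>nbhd_pairs E v. (-1::complex) ^ (\<Prod>i\<in>e. x i)) = (-1) ^ ((\<Sum>u\<in>nbhd E v. x u) choose 2)"
    using prod_minus_one_card_2_subsets[OF finite_nbhd[OF assms(1)] assms(2)]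
    unfolding nbhd_pairs_def .
  finally show ?thesis .
qed

lemma bij_betw_nbhd_edges:
  assumes "simple_graph n E" shows "bij_betw (\<lambda>u. {u, v}) (nbhd E v) {e\<in>E. v \<in> e}"
proof (rule bij_betwI')
  fix u w assume "u \<in> nbhd E v" "w \<in> nbhd E v"
  show "({u, v} = {w, v}) = (u = w)" unfolding doubleton_eq_iff by blast
next
  fix u assume "u \<in> nbhd E v" then show "{u, v} \<in> {e\<in>E. v \<in> e}" unfolding nbhd_def by simp
next
  fix e assume "e \<in> {e\<in>E. v \<in> e}"
  then have e: "e \<in> E" "v \<in> e" by auto
  then obtain i j where "e = {i, j}" using assms unfolding simple_graph_def by blast
  with e show "\<exists>u\<in>nbhd E v. e = {u, v}"
    unfolding nbhd_def by (metis insertE insert_commute mem_Collect_eq singletonD)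
qed

lemma graph_sign_flip:
  assumes "simple_graph n E" "x v = 0"
  shows "graph_sign E (x(v := 1)) = graph_sign E x * (-1) ^ (\<Sum>u\<in>nbhd E v. x u)"
proof -
  define Ev where "Ev = {e\<in>E. v \<in> e}"
  have split: "graph_sign E y = (\<Prod>e\<in>E - Ev. (-1) ^ (\<Prod>i\<in>e. y i)) * (\<Prod>e\<in>Ev. (-1) ^ (\<Prod>i\<in>e. y i))" for y
    unfolding graph_sign_def by (rule prod.subset_diff) (auto simp: Ev_def simple_graph_finite[OF assms(1)])
  have off_v: "(\<Prod>e\<in>E - Ev. (-1::complex) ^ (\<Prod>i\<in>e. (x(v := 1)) i)) = (\<Prod>e\<in>E - Ev. (-1) ^ (\<Prod>i\<in>e. x i))"
    by (intro prod.cong HOL.refl arg_cong[where f="\<lambda>t. (-1) ^ t"]) (auto simp: Ev_def)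
  have at_v_before: "(\<Prod>e\<in>Ev. (-1::complex) ^ (\<Prod>i\<in>e. x i)) = 1"
  proof (rule prod.neutral, rule ballI)
    fix e assume "e \<in> Ev"
    then have "v \<in> e" "finite e" using assms(1) unfolding Ev_def simple_graph_def by auto
    then have "(\<Prod>i\<in>e. x i) = 0" using assms(2) by (meson prod_zero_iff)
    then show "(-1::complex) ^ (\<Prod>i\<in>e. x i) = 1" by simp
  qed
  have "bij_betw (\<lambda>u. {u, v}) (nbhd E v) Ev"
    unfolding Ev_def by (rule bij_betw_nbhd_edges[OF assms(1)])
  then have "(\<Prod>e\<in>Ev. (-1::complex) ^ (\<Prod>i\<in>e. (x(v := 1)) i))
      = (\<Prod>u\<in>nbhd E v. (-1) ^ (\<Prod>i\<in>{u, v}. (x(v := 1)) i))"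
    by (rule prod.reindex_bij_betw[symmetric])
  also have "\<dots> = (\<Prod>u\<in>nbhd E v. (-1) ^ x u)"
  proof (rule prod.cong[OF HOL.refl])
    fix u assume "u \<in> nbhd E v"
    then have "u \<noteq> v" using not_in_nbhd_self[OF assms(1), of v] by blast
    then show "(-1::complex) ^ (\<Prod>i\<in>{u, v}. (x(v := 1)) i) = (-1) ^ x u" by simp
  qed
  also have "\<dots> = (-1) ^ (\<Sum>u\<in>nbhd E v. x u)" by (simp add: power_sum)
  finally show ?thesis using split[of x] split[of "x(v := 1)"] off_v at_v_before by simp
qed

section \<open>The unnormalised IHN transform\<close>

lemma mem_cube_iff: "x \<in> cube n \<longleftrightarrow> (\<forall>j<n. x j \<in> {0, 1}) \<and> (\<forall>j\<ge>n. x j = undefined)"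
  unfolding cube_def PiE_def extensional_def Pi_def by auto

lemma finite_cube: "finite (cube n)"
  unfolding cube_def by (simp add: finite_PiE)

lemma fun_upd_in_cube: "x \<in> cube n \<Longrightarrow> v < n \<Longrightarrow> a \<in> {0, 1} \<Longrightarrow> x(v := a) \<in> cube n"
  unfolding mem_cube_iff by auto

lemma sum_cube_split:
  assumes "v < n"
  shows "(\<Sum>x\<in>cube n. F x) = (\<Sum>x | x \<in> cube n \<and> x v = 0. F x + F (x(v := 1)))"
proof -
  define C0 where "C0 = {x\<in>cube n. x v = 0}"
  define C1 where "C1 = {x\<in>cube n. x v = 1}"
  have "bij_betw (\<lambda>x. x(v := 1)) C0 C1"
    by (rule bij_betw_byWitness[where f' = "\<lambda>x. x(v := 0)"])
      (use assms in \<open>auto simp: C0_def C1_def fun_upd_in_cube\<close>)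
  then have C1: "(\<Sum>x\<in>C1. F x) = (\<Sum>x\<in>C0. F (x(v := 1)))"
    using sum.reindex_bij_betw[of _ C0 C1 F] by simp
  have "x v = 0 \<or> x v = 1" if "x \<in> cube n" for x
    using assms that unfolding mem_cube_iff by auto
  then have "cube n = C0 \<union> C1"
    unfolding C0_def C1_def by auto
  then have "(\<Sum>x\<in>cube n. F x) = (\<Sum>x\<in>C0 \<union> C1. F x)" by simp
  also have "\<dots> = (\<Sum>x\<in>C0. F x) + (\<Sum>x\<in>C1. F x)"
    by (rule sum.union_disjoint) (auto simp: C0_def C1_def finite_cube)
  finally show ?thesis unfolding C1 C0_def by (simp add: sum.distrib)
qed

lemma sum_cube_prod:
  fixes g :: "nat \<Rightarrow> nat \<Rightarrow> 'a::comm_semiring_1"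
  shows "(\<Sum>x\<in>cube n. \<Prod>j<n. g j (x j)) = (\<Prod>j<n. g j 0 + g j 1)"
  using prod_sum_PiE[of "{0..<n}" "\<lambda>_. {0, 1}" g] by (simp add: cube_def atLeast0LessThan)

abbreviation IHN_codes :: "nat \<Rightarrow> (nat \<Rightarrow> nat) set" where
  "IHN_codes n \<equiv> Pi\<^sub>E {0..<n} (\<lambda>_. {0, 1, 2})"

lemma mem_IHN_codes_iff: "c \<in> IHN_codes n \<longleftrightarrow> (\<forall>j<n. c j \<in> {0, 1, 2}) \<and> (\<forall>j\<ge>n. c j = undefined)"
  unfolding PiE_def extensional_def Pi_def by auto

definition graph_transform :: "nat \<Rightarrow> nat set set \<Rightarrow> (nat \<Rightarrow> nat) \<Rightarrow> (nat \<Rightarrow> nat) \<Rightarrow> complex" where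
  "graph_transform n E c k = (\<Sum>x\<in>cube n. (\<Prod>j<n. mat_IHN (c j) (k j) (x j)) * graph_sign E x)"

lemma norm_transform_entry_graph_bf:
  assumes "simple_graph n E"
  shows "(cmod (transform_entry n (graph_bf n E) c k))\<^sup>2 = (cmod (graph_transform n E c k))\<^sup>2 / 2 ^ n"
proof -
  have entry: "transform_entry n (graph_bf n E) c k = complex_of_real (2 powr (- real n / 2)) * graph_transform n E c k"
    unfolding transform_entry_def graph_transform_def sum_distrib_left minus_one_power_graph_bf[OF assms]
    by (rule sum.cong) (auto simp: algebra_simps)
  have "(2 powr (- real n / 2))\<^sup>2 = 2 powr (- real n / 2 + - real n / 2)"
    unfolding power2_eq_square powr_add ..
  also have "- real n / 2 + - real n / 2 = - real n" by simp
  also have "(2::real) powr (- real n) = 1 / 2 ^ n"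
    by (simp add: powr_minus powr_realpow divide_inverse)
  finally have "(2 powr (- real n / 2))\<^sup>2 = 1 / (2::real) ^ n" .
  then show ?thesis unfolding entry norm_mult power_mult_distrib norm_of_real by simp
qed

lemma prod_lessThan_fun_upd:
  fixes v n :: nat
  assumes "v < n"
  shows "(\<Prod>j<n. g j ((x(v := a)) j)) = g v a * (\<Prod>j\<in>{..<n} - {v}. g j (x j))"
proof -
  have "(\<Prod>j<n. g j ((x(v := a)) j)) = g v ((x(v := a)) v) * (\<Prod>j\<in>{..<n} - {v}. g j ((x(v := a)) j))"
    using assms by (intro prod.remove) auto
  also have "(\<Prod>j\<in>{..<n} - {v}. g j ((x(v := a)) j)) = (\<Prod>j\<in>{..<n} - {v}. g j (x j))"
    by (rule prod.cong) auto
  finally show ?thesis by simp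
qed

lemma graph_transform_split:
  assumes "simple_graph n E" "v < n"
  shows "graph_transform n E c k =
    (\<Sum>x | x \<in> cube n \<and> x v = 0. (\<Prod>j\<in>{..<n} - {v}. mat_IHN (c j) (k j) (x j)) * graph_sign E x *
       (mat_IHN (c v) (k v) 0 + mat_IHN (c v) (k v) 1 * (-1) ^ (\<Sum>u\<in>nbhd E v. x u)))"
  unfolding graph_transform_def sum_cube_split[OF assms(2)]
proof (rule sum.cong)
  fix x assume "x \<in> {x. x \<in> cube n \<and> x v = 0}"
  then have "x v = 0" by simp
  then have x0: "x(v := 0) = x" by (rule fun_upd_idem)
  define R where "R = (\<Prod>j\<in>{..<n} - {v}. mat_IHN (c j) (k j) (x j))"
  have "(\<Prod>j<n. mat_IHN (c j) (k j) (x j)) = mat_IHN (c v) (k v) 0 * R"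
    using prod_lessThan_fun_upd[OF assms(2), of "\<lambda>j. mat_IHN (c j) (k j)" x 0]
    unfolding x0 R_def .
  moreover have "(\<Prod>j<n. mat_IHN (c j) (k j) ((x(v := 1)) j)) = mat_IHN (c v) (k v) 1 * R"
    using prod_lessThan_fun_upd[OF assms(2), of "\<lambda>j. mat_IHN (c j) (k j)" x 1]
    unfolding R_def .
  moreover have "graph_sign E (x(v := 1)) = graph_sign E x * (-1) ^ (\<Sum>u\<in>nbhd E v. x u)"
    using graph_sign_flip[where x = x and v = v, OF assms(1) \<open>x v = 0\<close>] .
  ultimately show "(\<Prod>j<n. mat_IHN (c j) (k j) (x j)) * graph_sign E x +
      (\<Prod>j<n. mat_IHN (c j) (k j) ((x(v := 1)) j)) * graph_sign E (x(v := 1)) =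
    R * graph_sign E x *
      (mat_IHN (c v) (k v) 0 + mat_IHN (c v) (k v) 1 * (-1) ^ (\<Sum>u\<in>nbhd E v. x u))"
    by (simp add: algebra_simps)
qed simp

section \<open>Covariance under local complementation\<close>

text \<open>At a neighbour, \<open>U\<^sub>c\<close> is a diagonal phase times \<open>U\<^bsub>nbr_code c\<^esub>\<close> with permuted rows,
  times \<open>diag(1, i)\<close> (\<open>mat_IHN_nbr\<close>); pulling out \<open>i^x\<^sub>u\<close> at every neighbour leaves
  \<open>i^w (-1)^(w choose 2)\<close> at \<open>v\<close>, which depends only on \<open>w mod 2\<close> and is absorbed by
  replacing \<open>U\<^bsub>c v\<^esub>\<close> (\<open>mat_IHN_vertex\<close>).\<close>

definition nbr_code :: "nat \<Rightarrow> nat" where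
  "nbr_code c = (if c = 0 then 0 else if c = 1 then 2 else 1)"

definition nbr_index :: "nat \<Rightarrow> nat \<Rightarrow> nat" where
  "nbr_index c k = (if c = 1 then 1 - k else k)"

definition nbr_phase :: "nat \<Rightarrow> nat \<Rightarrow> complex" where
  "nbr_phase c k = (if c = 0 \<and> k = 1 then - \<i> else 1)"

definition vertex_code :: "nat \<Rightarrow> nat" where
  "vertex_code c = (if c = 0 then 2 else if c = 1 then 1 else 0)"

definition vertex_index :: "nat \<Rightarrow> nat \<Rightarrow> nat" where
  "vertex_index c k = (if c = 0 then 1 - k else k)"

definition vertex_phase :: "nat \<Rightarrow> nat \<Rightarrow> complex" where
  "vertex_phase c k = (if c = 1 then (if k = 0 then 1 else \<i>)
     else (if k = 0 then 1 + \<i> else 1 - \<i>) / complex_of_real (sqrt 2))"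

lemma sqrt_2_mult_sqrt_2_complex: "complex_of_real (sqrt 2) * complex_of_real (sqrt 2) = 2"
  by (simp flip: of_real_mult)

lemma mat_IHN_nbr:
  assumes "c \<in> {0, 1, 2}" "k \<in> {0, 1}" "y \<in> {0, 1}"
  shows "mat_IHN c k y = nbr_phase c k * mat_IHN (nbr_code c) (nbr_index c k) y * \<i> ^ y"
  using assms by (auto simp: mat_IHN_def nbr_phase_def nbr_code_def nbr_index_def field_simps)

lemma i_power_mult_minus_one_power_choose_two: "\<i> ^ w * (-1) ^ (w choose 2) = \<i> ^ (w mod 2)"
proof (induction w)
  case 0 then show ?case by (simp add: numeral_2_eq_2)
next
  case (Suc w)
  have "Suc w choose 2 = w + (w choose 2)"
    by (simp add: numeral_2_eq_2)
  then have "\<i> ^ Suc w * (-1) ^ (Suc w choose 2) = \<i> * (-1) ^ w * (\<i> ^ w * (-1) ^ (w choose 2))"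
    by (simp add: power_add algebra_simps)
  also have "\<dots> = \<i> ^ (Suc w mod 2)"
    unfolding Suc.IH by (cases "even w") (auto simp: mod_Suc minus_one_power_iff odd_iff_mod_2_eq_one)
  finally show ?case .
qed

lemma mat_IHN_vertex:
  assumes "c \<in> {0, 1, 2}" "k \<in> {0, 1}"
  shows "\<i> ^ w * (-1) ^ (w choose 2) * (mat_IHN c k 0 + mat_IHN c k 1 * (-1) ^ w) =
    vertex_phase c k * (mat_IHN (vertex_code c) (vertex_index c k) 0
      + mat_IHN (vertex_code c) (vertex_index c k) 1 * (-1) ^ w)"
proof -
  have "(-1::complex) ^ w = (-1) ^ (w mod 2)" by (simp add: minus_one_power_iff)
  moreover have "w mod 2 \<in> {0, 1}" by auto
  ultimately show ?thesis
    unfolding i_power_mult_minus_one_power_choose_two using assms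
    by (auto simp: mat_IHN_def vertex_phase_def vertex_code_def vertex_index_def
        field_simps sqrt_2_mult_sqrt_2_complex)
qed

lemma norm_nbr_phase: "cmod (nbr_phase c k) = 1"
  by (simp add: nbr_phase_def)

lemma norm_vertex_phase: "cmod (vertex_phase c k) = 1"
proof -
  have "cmod (1 + \<i>) = sqrt 2" "cmod (1 - \<i>) = sqrt 2" by (simp_all add: cmod_def)
  then show ?thesis unfolding vertex_phase_def by (simp add: norm_divide)
qed

definition lc_codes :: "nat set \<Rightarrow> nat \<Rightarrow> (nat \<Rightarrow> nat) \<Rightarrow> nat \<Rightarrow> nat" where
  "lc_codes N v c = (\<lambda>j. if j = v then vertex_code (c j) else if j \<in> N then nbr_code (c j) else c j)"

definition lc_index :: "nat set \<Rightarrow> nat \<Rightarrow> (nat \<Rightarrow> nat) \<Rightarrow> (nat \<Rightarrow> nat) \<Rightarrow> nat \<Rightarrow> nat" where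
  "lc_index N v c k = (\<lambda>j. if j = v then vertex_index (c j) (k j) else if j \<in> N then nbr_index (c j) (k j) else k j)"

lemma lc_codes_in_IHN_codes: "c \<in> IHN_codes n \<Longrightarrow> v < n \<Longrightarrow> N \<subseteq> {0..<n} \<Longrightarrow> lc_codes N v c \<in> IHN_codes n"
  unfolding mem_IHN_codes_iff lc_codes_def vertex_code_def nbr_code_def by auto

lemma lc_index_in_cube: "k \<in> cube n \<Longrightarrow> v < n \<Longrightarrow> N \<subseteq> {0..<n} \<Longrightarrow> lc_index N v c k \<in> cube n"
  unfolding mem_cube_iff lc_index_def vertex_index_def nbr_index_def by auto

lemma prod_mat_IHN_lc_codes:
  assumes N: "N \<subseteq> {..<n} - {v}" and c: "c \<in> IHN_codes n" and k: "k \<in> cube n" and x: "x \<in> cube n"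
  shows "(\<Prod>j\<in>{..<n} - {v}. mat_IHN (c j) (k j) (x j)) =
    (\<Prod>u\<in>N. nbr_phase (c u) (k u)) *
    (\<Prod>j\<in>{..<n} - {v}. mat_IHN (lc_codes N v c j) (lc_index N v c k j) (x j)) * \<i> ^ (\<Sum>u\<in>N. x u)"
proof -
  define \<phi> where "\<phi> j = nbr_phase (c j) (k j) * \<i> ^ x j" for j
  have "(\<Prod>j\<in>{..<n} - {v}. mat_IHN (c j) (k j) (x j)) =
      (\<Prod>j\<in>{..<n} - {v}. (if j \<in> N then \<phi> j else 1) * mat_IHN (lc_codes N v c j) (lc_index N v c k j) (x j))"
  proof (rule prod.cong[OF HOL.refl])
    fix j assume j: "j \<in> {..<n} - {v}"
    then have "c j \<in> {0, 1, 2}" "k j \<in> {0, 1}" "x j \<in> {0, 1}"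
      using c k x unfolding mem_IHN_codes_iff mem_cube_iff by auto
    then show "mat_IHN (c j) (k j) (x j) =
        (if j \<in> N then \<phi> j else 1) * mat_IHN (lc_codes N v c j) (lc_index N v c k j) (x j)"
      using j mat_IHN_nbr by (auto simp: lc_codes_def lc_index_def \<phi>_def)
  qed
  also have "\<dots> = (\<Prod>j\<in>{..<n} - {v}. if j \<in> N then \<phi> j else 1) *
      (\<Prod>j\<in>{..<n} - {v}. mat_IHN (lc_codes N v c j) (lc_index N v c k j) (x j))"
    by (rule prod.distrib)
  also have "(\<Prod>j\<in>{..<n} - {v}. if j \<in> N then \<phi> j else 1) = (\<Prod>j\<in>N. \<phi> j)"
    using N prod.inter_restrict[of "{..<n} - {v}" \<phi> N] by (simp add: Int_absorb1)
  also have "\<dots> = (\<Prod>u\<in>N. nbr_phase (c u) (k u)) * \<i> ^ (\<Sum>u\<in>N. x u)"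
    by (simp add: \<phi>_def prod.distrib power_sum)
  finally show ?thesis by (simp add: algebra_simps)
qed

lemma local_compl_summand:
  assumes s: "simple_graph n E" and v: "v < n" and c: "c \<in> IHN_codes n" and k: "k \<in> cube n"
    and x: "x \<in> cube n"
  defines "N \<equiv> nbhd E v"
  defines "c' \<equiv> lc_codes N v c" and "k' \<equiv> lc_index N v c k" and "w \<equiv> \<Sum>u\<in>N. x u"
  shows "(\<Prod>j\<in>{..<n} - {v}. mat_IHN (c j) (k j) (x j)) * graph_sign (local_compl E v) x *
      (mat_IHN (c v) (k v) 0 + mat_IHN (c v) (k v) 1 * (-1) ^ w) =
    vertex_phase (c v) (k v) * (\<Prod>u\<in>N. nbr_phase (c u) (k u)) *
      ((\<Prod>j\<in>{..<n} - {v}. mat_IHN (c' j) (k' j) (x j)) * graph_sign E x *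
        (mat_IHN (c' v) (k' v) 0 + mat_IHN (c' v) (k' v) 1 * (-1) ^ w))"
proof -
  define R where "R c k = (\<Prod>j\<in>{..<n} - {v}. mat_IHN (c j) (k j) (x j))" for c k :: "nat \<Rightarrow> nat"
  define D where "D = (\<Prod>u\<in>N. nbr_phase (c u) (k u))"
  have N: "N \<subseteq> {..<n} - {v}"
    using nbhd_subset[OF s] not_in_nbhd_self[OF s] unfolding N_def by fastforce
  have R: "R c k = D * R c' k' * \<i> ^ w"
    using prod_mat_IHN_lc_codes[OF N c k x] unfolding R_def D_def w_def c'_def k'_def .
  have "\<forall>u\<in>N. x u \<in> {0, 1}"
    using x N unfolding mem_cube_iff by auto
  then have sign: "graph_sign (local_compl E v) x = graph_sign E x * (-1) ^ (w choose 2)"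
    using graph_sign_local_compl[OF s] unfolding w_def N_def by blast
  have "c v \<in> {0, 1, 2}" "k v \<in> {0, 1}"
    using c k v unfolding mem_IHN_codes_iff mem_cube_iff by auto
  moreover have "c' v = vertex_code (c v)" "k' v = vertex_index (c v) (k v)"
    unfolding c'_def k'_def lc_codes_def lc_index_def by simp_all
  ultimately have vertex: "\<i> ^ w * (-1) ^ (w choose 2) * (mat_IHN (c v) (k v) 0 + mat_IHN (c v) (k v) 1 * (-1) ^ w) =
      vertex_phase (c v) (k v) * (mat_IHN (c' v) (k' v) 0 + mat_IHN (c' v) (k' v) 1 * (-1) ^ w)"
    using mat_IHN_vertex by simp
  have "R c k * graph_sign (local_compl E v) x * (mat_IHN (c v) (k v) 0 + mat_IHN (c v) (k v) 1 * (-1) ^ w)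
      = D * R c' k' * graph_sign E x *
        (\<i> ^ w * (-1) ^ (w choose 2) * (mat_IHN (c v) (k v) 0 + mat_IHN (c v) (k v) 1 * (-1) ^ w))"
    unfolding R sign by (simp only: ac_simps)
  also have "\<dots> = vertex_phase (c v) (k v) * D *
      (R c' k' * graph_sign E x * (mat_IHN (c' v) (k' v) 0 + mat_IHN (c' v) (k' v) 1 * (-1) ^ w))"
    unfolding vertex by (simp only: ac_simps)
  finally show ?thesis unfolding R_def D_def .
qed

lemma graph_transform_local_compl:
  assumes s: "simple_graph n E" and v: "v < n" and c: "c \<in> IHN_codes n" and k: "k \<in> cube n"
  defines "N \<equiv> nbhd E v"
  shows "graph_transform n (local_compl E v) c k =
    vertex_phase (c v) (k v) * (\<Prod>u\<in>N. nbr_phase (c u) (k u)) *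
    graph_transform n E (lc_codes N v c) (lc_index N v c k)"
proof -
  have "graph_transform n (local_compl E v) c k =
      (\<Sum>x | x \<in> cube n \<and> x v = 0. (\<Prod>j\<in>{..<n} - {v}. mat_IHN (c j) (k j) (x j)) *
        graph_sign (local_compl E v) x * (mat_IHN (c v) (k v) 0 + mat_IHN (c v) (k v) 1 * (-1) ^ (\<Sum>u\<in>N. x u)))"
    using graph_transform_split[OF simple_graph_local_compl[OF s, of v] v]
    unfolding nbhd_local_compl_self[OF s] N_def .
  also have "\<dots> = (\<Sum>x | x \<in> cube n \<and> x v = 0.
      vertex_phase (c v) (k v) * (\<Prod>u\<in>N. nbr_phase (c u) (k u)) *
      ((\<Prod>j\<in>{..<n} - {v}. mat_IHN (lc_codes N v c j) (lc_index N v c k j) (x j)) * graph_sign E x *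
        (mat_IHN (lc_codes N v c v) (lc_index N v c k v) 0
          + mat_IHN (lc_codes N v c v) (lc_index N v c k v) 1 * (-1) ^ (\<Sum>u\<in>N. x u))))"
    unfolding N_def by (intro sum.cong HOL.refl local_compl_summand[OF s v c k]) simp
  also have "\<dots> = vertex_phase (c v) (k v) * (\<Prod>u\<in>N. nbr_phase (c u) (k u)) *
      graph_transform n E (lc_codes N v c) (lc_index N v c k)"
    unfolding graph_transform_split[OF s v] sum_distrib_left N_def ..
  finally show ?thesis .
qed

lemma norm_graph_transform_local_compl:
  assumes "simple_graph n E" "v < n" "c \<in> IHN_codes n" "k \<in> cube n"
  shows "cmod (graph_transform n (local_compl E v) c k) =
    cmod (graph_transform n E (lc_codes (nbhd E v) v c) (lc_index (nbhd E v) v c k))"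
  unfolding graph_transform_local_compl[OF assms] norm_mult norm_vertex_phase
    prod_norm[symmetric] norm_nbr_phase by simp

section \<open>The bounds\<close>

definition active_positions :: "nat \<Rightarrow> (nat \<Rightarrow> nat) \<Rightarrow> nat set" where
  "active_positions n c = {j. j < n \<and> c j \<noteq> 0}"

lemma norm_graph_transform_sq_le:
  assumes c: "c \<in> IHN_codes n" and k: "k \<in> cube n"
  shows "(cmod (graph_transform n E c k))\<^sup>2 \<le> 2 ^ card (active_positions n c)"
proof -
  have "cmod (graph_transform n E c k) \<le> (\<Sum>x\<in>cube n. cmod ((\<Prod>j<n. mat_IHN (c j) (k j) (x j)) * graph_sign E x))"
    unfolding graph_transform_def by (rule norm_sum)
  also have "\<dots> = (\<Sum>x\<in>cube n. \<Prod>j<n. cmod (mat_IHN (c j) (k j) (x j)))"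
    unfolding norm_mult norm_graph_sign prod_norm by simp
  also have "\<dots> = (\<Prod>j<n. cmod (mat_IHN (c j) (k j) 0) + cmod (mat_IHN (c j) (k j) 1))"
    by (rule sum_cube_prod)
  also have "\<dots> = (\<Prod>j<n. if j \<in> active_positions n c then sqrt 2 else 1)"
  proof (rule prod.cong[OF HOL.refl])
    fix j assume "j \<in> {..<n}"
    then have "c j \<in> {0, 1, 2}" "k j \<in> {0, 1}" using c k unfolding mem_IHN_codes_iff mem_cube_iff by auto
    moreover have "2 / sqrt 2 = sqrt 2" by (simp add: real_div_sqrt)
    ultimately show "cmod (mat_IHN (c j) (k j) 0) + cmod (mat_IHN (c j) (k j) 1) =
        (if j \<in> active_positions n c then sqrt 2 else 1)"
      using \<open>j \<in> {..<n}\<close> by (auto simp: mat_IHN_def norm_divide active_positions_def)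
  qed
  also have "\<dots> = sqrt 2 ^ card (active_positions n c)"
    by (simp add: prod.If_cases active_positions_def Int_def)
  finally have "(cmod (graph_transform n E c k))\<^sup>2 \<le> (sqrt 2 ^ card (active_positions n c))\<^sup>2"
    by (simp add: power_mono)
  then show ?thesis by (simp add: real_sqrt_power[symmetric])
qed

lemma norm_graph_transform_eq_local_compl:
  assumes s: "simple_graph n E" and "v < n" "c \<in> IHN_codes n" "k \<in> cube n"
  shows "cmod (graph_transform n E c k) =
    cmod (graph_transform n (local_compl E v) (lc_codes (nbhd E v) v c) (lc_index (nbhd E v) v c k))"
  using norm_graph_transform_local_compl[OF simple_graph_local_compl[OF s, of v] assms(2-)]
  unfolding local_compl_local_compl[OF s] nbhd_local_compl_self[OF s] .

lemma active_positions_lc_codes_off_vertex: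
  assumes "c \<in> IHN_codes n" "j \<noteq> v"
  shows "j \<in> active_positions n (lc_codes N v c) \<longleftrightarrow> j \<in> active_positions n c"
  using assms unfolding active_positions_def mem_IHN_codes_iff lc_codes_def nbr_code_def by auto

lemma finite_active_positions: "finite (active_positions n c)"
  unfolding active_positions_def by simp

lemma local_compl_at_N_position:
  assumes s: "simple_graph n E" and c: "c \<in> IHN_codes n" and k: "k \<in> cube n"
    and v: "v \<in> active_positions n c" and cv: "c v = 2"
  shows "\<exists>E'\<in>lc_orbit n E. \<exists>c'\<in>IHN_codes n. \<exists>k'\<in>cube n.
    card (active_positions n c') < card (active_positions n c) \<and>
    cmod (graph_transform n E c k) = cmod (graph_transform n E' c' k')"
proof -
  let ?c' = "lc_codes (nbhd E v) v c" and ?k' = "lc_index (nbhd E v) v c k"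
  have vn: "v < n" using v unfolding active_positions_def by simp
  have "v \<notin> active_positions n ?c'"
    using cv unfolding active_positions_def lc_codes_def vertex_code_def by simp
  then have "j \<in> active_positions n ?c' \<longleftrightarrow> j \<in> active_positions n c - {v}" for j
    using active_positions_lc_codes_off_vertex[OF c, of j v] by (cases "j = v") auto
  then have "active_positions n ?c' = active_positions n c - {v}" by (rule set_eqI)
  then have "card (active_positions n ?c') < card (active_positions n c)"
    using card_Diff1_less[OF finite_active_positions v] by simp
  moreover have "cmod (graph_transform n E c k) = cmod (graph_transform n (local_compl E v) ?c' ?k')"
    by (rule norm_graph_transform_eq_local_compl[OF s vn c k])
  moreover have "?c' \<in> IHN_codes n" "?k' \<in> cube n"
    using lc_codes_in_IHN_codes[OF c vn nbhd_subset[OF s]] lc_index_in_cube[OF k vn nbhd_subset[OF s]] .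
  ultimately show ?thesis using local_compl_in_lc_orbit[OF vn] by blast
qed

lemma local_compl_at_H_edge:
  assumes s: "simple_graph n E" and c: "c \<in> IHN_codes n" and k: "k \<in> cube n"
    and uw: "{u, w} \<in> E" and cu: "c u = 1" and cw: "c w = 1"
  shows "\<exists>c'\<in>IHN_codes n. \<exists>k'\<in>cube n. active_positions n c' = active_positions n c \<and> c' w = 2 \<and>
    cmod (graph_transform n E c k) = cmod (graph_transform n (local_compl E u) c' k')"
proof (intro bexI conjI)
  let ?c' = "lc_codes (nbhd E u) u c"
  have u: "u < n" and "u \<noteq> w" using simple_graph_edgeD[OF s uw] by simp_all
  moreover have "w \<in> nbhd E u" using uw by (simp add: nbhd_def insert_commute)
  ultimately show "?c' w = 2" using cw by (simp add: lc_codes_def nbr_code_def)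
  have "u \<in> active_positions n ?c' \<longleftrightarrow> u \<in> active_positions n c"
    using cu u unfolding active_positions_def lc_codes_def vertex_code_def by simp
  then have "j \<in> active_positions n ?c' \<longleftrightarrow> j \<in> active_positions n c" for j
    using active_positions_lc_codes_off_vertex[OF c, of j u] by (cases "j = u") auto
  then show "active_positions n ?c' = active_positions n c" by (rule set_eqI)
  show "cmod (graph_transform n E c k) =
      cmod (graph_transform n (local_compl E u) ?c' (lc_index (nbhd E u) u c k))"
    by (rule norm_graph_transform_eq_local_compl[OF s u c k])
  show "?c' \<in> IHN_codes n" by (rule lc_codes_in_IHN_codes[OF c u nbhd_subset[OF s]])
  show "lc_index (nbhd E u) u c k \<in> cube n" by (rule lc_index_in_cube[OF k u nbhd_subset[OF s]])
qed

lemma exists_smaller_active_positions: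
  assumes s: "simple_graph n E" and c: "c \<in> IHN_codes n" and k: "k \<in> cube n"
    and dep: "\<not> independent_set n E (active_positions n c)"
  shows "\<exists>E'\<in>lc_orbit n E. \<exists>c'\<in>IHN_codes n. \<exists>k'\<in>cube n.
    card (active_positions n c') < card (active_positions n c) \<and>
    cmod (graph_transform n E c k) = cmod (graph_transform n E' c' k')"
proof (cases "\<exists>v\<in>active_positions n c. c v = 2")
  case True
  then obtain v where "v \<in> active_positions n c" "c v = 2" by blast
  then show ?thesis by (rule local_compl_at_N_position[OF s c k])
next
  case False
  obtain u w where u: "u \<in> active_positions n c" and w: "w \<in> active_positions n c" and uw: "{u, w} \<in> E"
    using dep unfolding independent_set_def active_positions_def by auto
  moreover have "c u \<in> {1, 2}" "c w \<in> {1, 2}"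
    using u w c unfolding active_positions_def mem_IHN_codes_iff by auto
  ultimately have "c u = 1" "c w = 1" using False by auto
  from local_compl_at_H_edge[OF s c k uw this] obtain c1 k1 where
    c1: "c1 \<in> IHN_codes n" "k1 \<in> cube n" "active_positions n c1 = active_positions n c" "c1 w = 2"
    and eq1: "cmod (graph_transform n E c k) = cmod (graph_transform n (local_compl E u) c1 k1)"
    by blast
  have "w \<in> active_positions n c1" using w c1(3) by simp
  from local_compl_at_N_position[OF simple_graph_local_compl[OF s] c1(1,2) this c1(4)]
  obtain E' c' k' where E': "E' \<in> lc_orbit n (local_compl E u)"
    and c': "c' \<in> IHN_codes n" "k' \<in> cube n" "card (active_positions n c') < card (active_positions n c)"
    and eq2: "cmod (graph_transform n (local_compl E u) c1 k1) = cmod (graph_transform n E' c' k')"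
    unfolding c1(3) by blast
  have "local_compl E u \<in> lc_orbit n E"
    using simple_graph_edgeD[OF s uw] by (intro local_compl_in_lc_orbit) simp
  with E' have "E' \<in> lc_orbit n E" by (rule lc_orbit_trans)
  with c' show ?thesis unfolding eq1 eq2 by blast
qed

lemma norm_graph_transform_sq_le_independent_set:
  assumes "simple_graph n E" "c \<in> IHN_codes n" "k \<in> cube n"
  shows "\<exists>K\<in>lc_orbit n E. \<exists>S. independent_set n K S \<and> (cmod (graph_transform n E c k))\<^sup>2 \<le> 2 ^ card S"
  using assms
proof (induction "card (active_positions n c)" arbitrary: E c k rule: less_induct)
  case less
  show ?case
  proof (cases "independent_set n E (active_positions n c)")
    case True
    then show ?thesis
      using norm_graph_transform_sq_le[OF less.prems(2,3)] lc_orbit.refl by blast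
  next
    case False
    from exists_smaller_active_positions[OF less.prems this] obtain E' c' k' where
      E': "E' \<in> lc_orbit n E" "c' \<in> IHN_codes n" "k' \<in> cube n"
      "card (active_positions n c') < card (active_positions n c)"
      "cmod (graph_transform n E c k) = cmod (graph_transform n E' c' k')"
      by blast
    from less.hyps[OF E'(4) lc_orbit_simple_graph[OF E'(1) less.prems(1)] E'(2,3)]
    obtain K S where "K \<in> lc_orbit n E'" "independent_set n K S"
      "(cmod (graph_transform n E' c' k'))\<^sup>2 \<le> 2 ^ card S"
      by blast
    then show ?thesis using E'(1,5) lc_orbit_trans by metis
  qed
qed

lemma norm_graph_transform_sq_le_lc_lambda:
  assumes s: "simple_graph n E" and "c \<in> IHN_codes n" "k \<in> cube n"
  shows "(cmod (graph_transform n E c k))\<^sup>2 \<le> 2 ^ lc_lambda n E"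
proof -
  obtain K S where K: "K \<in> lc_orbit n E" and S: "independent_set n K S"
    and le: "(cmod (graph_transform n E c k))\<^sup>2 \<le> 2 ^ card S"
    using norm_graph_transform_sq_le_independent_set[OF assms] by blast
  have "card S \<le> independence_number n K" using S by (rule card_le_independence_number)
  also have "\<dots> \<le> lc_lambda n E" using s K by (rule independence_number_le_lc_lambda)
  finally have "(2::real) ^ card S \<le> 2 ^ lc_lambda n E" by simp
  with le show ?thesis by linarith
qed

lemma graph_sign_independent_support:
  assumes s: "simple_graph n K" and S: "independent_set n K S" and x: "\<forall>j<n. j \<notin> S \<longrightarrow> x j = 0"
  shows "graph_sign K x = 1"
  unfolding graph_sign_def
proof (rule prod.neutral, rule ballI)
  fix e assume "e \<in> K"
  then obtain a b where ab: "a < n" "b < n" "a \<noteq> b" "e = {a, b}"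
    using s unfolding simple_graph_def by meson
  then have "a \<notin> S \<or> b \<notin> S" using S \<open>e \<in> K\<close> unfolding independent_set_def by blast
  then have "x a = 0 \<or> x b = 0" using x ab by auto
  then show "(-1::complex) ^ (\<Prod>i\<in>e. x i) = 1" using ab by auto
qed

lemma graph_transform_independent_set:
  assumes s: "simple_graph n K" and S: "independent_set n K S"
  shows "\<exists>c\<in>IHN_codes n. \<exists>k\<in>cube n. (cmod (graph_transform n K c k))\<^sup>2 = 2 ^ card S"
proof (intro bexI)
  define c :: "nat \<Rightarrow> nat" where "c j = (if j < n then (if j \<in> S then 1 else 0) else undefined)" for j
  define k :: "nat \<Rightarrow> nat" where "k j = (if j < n then 0 else undefined)" for j
  show "c \<in> IHN_codes n" unfolding mem_IHN_codes_iff c_def by auto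
  show "k \<in> cube n" unfolding mem_cube_iff k_def by auto
  have Sn: "S \<subseteq> {..<n}" using S unfolding independent_set_def by auto
  have sign: "(\<Prod>j<n. mat_IHN (c j) (k j) (x j)) * graph_sign K x = (\<Prod>j<n. mat_IHN (c j) (k j) (x j))"
    for x
  proof (cases "\<forall>j<n. j \<notin> S \<longrightarrow> x j = 0")
    case True
    then show ?thesis using graph_sign_independent_support[OF s S] by simp
  next
    case False
    then obtain j where "j < n" "j \<notin> S" "x j \<noteq> 0" by blast
    then have "mat_IHN (c j) (k j) (x j) = 0" unfolding c_def k_def mat_IHN_def by auto
    then show ?thesis using \<open>j < n\<close> by (auto intro!: prod_zero)
  qed
  have "graph_transform n K c k = (\<Prod>j<n. mat_IHN (c j) (k j) 0 + mat_IHN (c j) (k j) 1)"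
    unfolding graph_transform_def sign by (rule sum_cube_prod)
  also have "\<dots> = (\<Prod>j<n. if j \<in> S then complex_of_real (sqrt 2) else 1)"
  proof (rule prod.cong[OF HOL.refl])
    fix j assume "j \<in> {..<n}"
    have "2 / complex_of_real (sqrt 2) = complex_of_real (sqrt 2)"
      using sqrt_2_mult_sqrt_2_complex by (simp add: divide_eq_eq)
    then show "mat_IHN (c j) (k j) 0 + mat_IHN (c j) (k j) 1 = (if j \<in> S then complex_of_real (sqrt 2) else 1)"
      using \<open>j \<in> {..<n}\<close> by (auto simp: c_def k_def mat_IHN_def add_divide_distrib[symmetric])
  qed
  also have "\<dots> = complex_of_real (sqrt 2) ^ card S"
    using Sn by (simp add: prod.If_cases Int_absorb1)
  finally show "(cmod (graph_transform n K c k))\<^sup>2 = 2 ^ card S"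
    by (simp add: norm_power real_sqrt_power[symmetric])
qed

lemma lc_orbit_graph_transform_norm:
  assumes "K \<in> lc_orbit n G" "simple_graph n G" "c \<in> IHN_codes n" "k \<in> cube n"
  shows "\<exists>c'\<in>IHN_codes n. \<exists>k'\<in>cube n. cmod (graph_transform n K c k) = cmod (graph_transform n G c' k')"
  using assms
proof (induction arbitrary: c k rule: lc_orbit.induct)
  case refl then show ?case by blast
next
  case (step H v)
  have H: "simple_graph n H" using lc_orbit_simple_graph step by blast
  have "cmod (graph_transform n (local_compl H v) c k) =
      cmod (graph_transform n H (lc_codes (nbhd H v) v c) (lc_index (nbhd H v) v c k))"
    by (rule norm_graph_transform_local_compl[OF H step.hyps(2) step.prems(2,3)])
  moreover have "lc_codes (nbhd H v) v c \<in> IHN_codes n" "lc_index (nbhd H v) v c k \<in> cube n"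
    using lc_codes_in_IHN_codes[OF step.prems(2) step.hyps(2) nbhd_subset[OF H]]
      lc_index_in_cube[OF step.prems(3) step.hyps(2) nbhd_subset[OF H]] .
  ultimately show ?case using step.IH[OF step.prems(1)] by metis
qed

lemma graph_transform_attains_lc_lambda:
  assumes s: "simple_graph n E"
  shows "\<exists>c\<in>IHN_codes n. \<exists>k\<in>cube n. (cmod (graph_transform n E c k))\<^sup>2 = 2 ^ lc_lambda n E"
proof -
  obtain K where K: "K \<in> lc_orbit n E" "independence_number n K = lc_lambda n E"
    using lc_lambda_attained[OF s] by blast
  obtain S where S: "independent_set n K S" and card_S: "card S = lc_lambda n E"
    using independence_number_attained[of n K] K(2) by auto
  obtain c k where ck: "c \<in> IHN_codes n" "k \<in> cube n"
    and "(cmod (graph_transform n K c k))\<^sup>2 = 2 ^ lc_lambda n E"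
    using graph_transform_independent_set[OF lc_orbit_simple_graph[OF K(1) s] S] unfolding card_S by blast
  moreover obtain c' k' where "c' \<in> IHN_codes n" "k' \<in> cube n"
    and "cmod (graph_transform n K c k) = cmod (graph_transform n E c' k')"
    using lc_orbit_graph_transform_norm[OF K(1) s ck] by blast
  ultimately show ?thesis by auto
qed

lemma PAR_IHN_graph_bf:
  assumes s: "simple_graph n E"
  shows "PAR_IHN n (graph_bf n E) = 2 ^ lc_lambda n E"
proof -
  define A where "A = {(cmod (transform_entry n (graph_bf n E) c k))\<^sup>2 | c k. c \<in> IHN_codes n \<and> k \<in> cube n}"
  have "A = (\<lambda>(c, k). (cmod (transform_entry n (graph_bf n E) c k))\<^sup>2) ` (IHN_codes n \<times> cube n)"
    unfolding A_def by auto
  then have "finite A" by (simp add: finite_PiE finite_cube)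
  moreover have "y \<le> 2 ^ lc_lambda n E / 2 ^ n" if "y \<in> A" for y
  proof -
    from that obtain c k where ck: "c \<in> IHN_codes n" "k \<in> cube n"
      and y: "y = (cmod (transform_entry n (graph_bf n E) c k))\<^sup>2"
      unfolding A_def by blast
    have "(cmod (graph_transform n E c k))\<^sup>2 / 2 ^ n \<le> 2 ^ lc_lambda n E / 2 ^ n"
      by (rule divide_right_mono[OF norm_graph_transform_sq_le_lc_lambda[OF s ck]]) simp
    then show ?thesis unfolding y norm_transform_entry_graph_bf[OF s] .
  qed
  moreover have "2 ^ lc_lambda n E / 2 ^ n \<in> A"
  proof -
    obtain c k where "c \<in> IHN_codes n" "k \<in> cube n" "(cmod (graph_transform n E c k))\<^sup>2 = 2 ^ lc_lambda n E"
      using graph_transform_attains_lc_lambda[OF s] by blast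
    then show ?thesis unfolding A_def norm_transform_entry_graph_bf[OF s]
      by (intro CollectI exI[of _ c] exI[of _ k]) simp
  qed
  ultimately have "Max A = 2 ^ lc_lambda n E / 2 ^ n" by (rule Max_eqI)
  then show ?thesis unfolding PAR_IHN_def A_def[symmetric] by simp
qed

theorem mainTheorem5:
  fixes n :: nat and G :: "nat set set"
  assumes "simple_graph n G"
  shows "(\<forall>H \<in> lc_orbit n G. PAR_IHN n (graph_bf n H) = 2 ^ lc_lambda n G)
         \<and> PAR_IHN n (graph_bf n G) = 2 ^ lc_lambda n G"
proof -
  have "PAR_IHN n (graph_bf n H) = 2 ^ lc_lambda n G" if H: "H \<in> lc_orbit n G" for H
  proof -
    have "lc_lambda n H = lc_lambda n G"
      unfolding lc_lambda_def lc_orbit_eq[OF H assms] ..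
    then show ?thesis
      using PAR_IHN_graph_bf[OF lc_orbit_simple_graph[OF H assms]] by simp
  qed
  then show ?thesis using lc_orbit.refl by blast
qed

end
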